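(* Let $\eta$ be a primitive $7$-th root of unity. Call a real polynomial $G(x,y,z)$ special if $G(\eta x,\eta^2y,\eta^4z)=G(x,y,z)$, $G=1$ on the plane $x+y+z=1$, $G$ has only non-negative coefficients, and $G(0,0,0)=0$. Let $G$ be special. If $\deg G=7$, then $N(G)=17$. There is no special $G$ of degree $8$ or $9$. If $\deg G=10$, then $N(G)=29$ or $N(G)=30$. If $\deg G=11$, then $N(G)\ge 31$.
   Context: $N(G)$ denotes the number of distinct monomials with nonzero coefficient in $G$. *)

theory Defs
  imports Complex_Main
begin

text \<open>A real polynomial G(x,y,z) in three variables is represented by its coefficient
  function c, where c i j k is the coefficient of x^i y^j z^k; it must have finite support.\<close>

type_synonym poly3 = "nat \<Rightarrow> nat \<Rightarrow> nat \<Rightarrow> real"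

definition supp3 :: "poly3 \<Rightarrow> (nat \<times> nat \<times> nat) set" where
  "supp3 c = {(i, j, k). c i j k \<noteq> 0}"

definition is_poly3 :: "poly3 \<Rightarrow> bool" where
  "is_poly3 c \<longleftrightarrow> finite (supp3 c)"

definition eval3 :: "poly3 \<Rightarrow> 'a::real_algebra_1 \<Rightarrow> 'a \<Rightarrow> 'a \<Rightarrow> 'a" where
  "eval3 c x y z = (\<Sum>(i, j, k)\<in>supp3 c. of_real (c i j k) * x ^ i * y ^ j * z ^ k)"

text \<open>Total degree (for a nonzero polynomial).\<close>
definition deg3 :: "poly3 \<Rightarrow> nat" where
  "deg3 c = Max ((\<lambda>(i, j, k). i + j + k) ` supp3 c)"

definition N3 :: "poly3 \<Rightarrow> nat" where
  "N3 c = card (supp3 c)"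

definition special :: "complex \<Rightarrow> poly3 \<Rightarrow> bool" where
  "special \<eta> c \<longleftrightarrow> is_poly3 c
     \<and> (\<forall>x y z :: complex. eval3 c (\<eta> * x) (\<eta>^2 * y) (\<eta>^4 * z) = eval3 c x y z)
     \<and> (\<forall>x y z :: real. x + y + z = 1 \<longrightarrow> eval3 c x y z = 1)
     \<and> (\<forall>i j k. c i j k \<ge> 0)
     \<and> eval3 c (0::real) 0 0 = 0"

end

(*
  A monomial x^i y^j z^k is invariant under (x, y, z) |-> (eta x, eta^2 y, eta^4 z) iff
  7 divides i + 2j + 4k, so a special G of degree at most 11 lives on the 51 nonconstant invariant
  monomials of degree at most 11. Comparing coefficients in G(x, y, 1 - x - y) = 1 gives a linear
  system whose solutions are affine in four free coefficients, those of x^8yz, yz^10, xy^10 and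
  x^10z. Nonnegativity and the degree then pin down the support. In degree at most 9 the free
  coefficients vanish and G is the degree 7 polynomial with 17 terms; in degree 10 only x^8yz
  survives, leaving 29 or 30 terms. In degree 11 one of the coefficients of x^10z, yz^10, xy^10,
  which the cyclic substitution x -> y -> z -> x permutes, is positive; after such a substitution
  it is that of x^10z, and then at least 31 coefficients are positive.
*)
theory Submission
  imports Defs "HOL-Computational_Algebra.Polynomial"
begin

lemma sum_power_eq_0_imp_coeff_eq_0:
  fixes w :: "'b \<Rightarrow> 'a::{idom,ring_char_0}"
  assumes "finite S" and inj: "inj_on e S" and zero: "\<And>t. (\<Sum>m\<in>S. w m * t ^ e m) = 0"
    and "m \<in> S"
  shows "w m = 0"
proof -
  define P where "P = (\<Sum>m\<in>S. monom (w m) (e m))"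
  have "poly P t = 0" for t
    using zero by (simp add: P_def poly_sum poly_monom)
  then have "P = 0"
    using poly_all_0_iff_0 by blast
  have "coeff P (e m) = (\<Sum>m'\<in>S. if m' = m then w m' else 0)"
    unfolding P_def coeff_sum coeff_monom
    by (rule sum.cong) (use inj \<open>m \<in> S\<close> in \<open>auto simp: inj_on_def\<close>)
  also have "\<dots> = w m"
    using assms(1,4) by simp
  finally show ?thesis
    using \<open>P = 0\<close> by simp
qed

lemma monomials3_independent:
  fixes w :: "nat \<times> nat \<times> nat \<Rightarrow> 'a::{idom,ring_char_0}"
  assumes fin: "finite S"
    and zero: "\<And>x y z. (\<Sum>(i, j, k)\<in>S. w (i, j, k) * x ^ i * y ^ j * z ^ k) = 0"
    and "m \<in> S"
  shows "w m = 0"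
proof -
  obtain D where D: "(\<lambda>(i, j, k). i + j + k) ` S \<subseteq> {..<D}"
    using finite_nat_bounded fin by blast
  \<comment> \<open>Kronecker substitution \<open>x = t\<close>, \<open>y = t^D\<close>, \<open>z = t^(D*D)\<close>:
    the base-\<open>D\<close> digits of \<open>e m\<close> recover \<open>m\<close>\<close>
  define e where "e = (\<lambda>(i::nat, j::nat, k::nat). i + D * (j + D * k))"
  have digits: "e (i, j, k) mod D = i \<and> e (i, j, k) div D mod D = j \<and> e (i, j, k) div D div D = k"
    if "(i, j, k) \<in> S" for i j k
  proof -
    have "i < D" "j < D" "k < D"
      using D that by auto
    then show ?thesis
      by (simp add: e_def)
  qed
  have "inj_on e S"
    by (rule inj_onI) (metis digits prod_cases3)
  moreover have "(\<Sum>m\<in>S. w m * t ^ e m) = 0" for t :: 'a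
  proof -
    have "w (i, j, k) * t ^ e (i, j, k) = w (i, j, k) * t ^ i * (t ^ D) ^ j * ((t ^ D) ^ D) ^ k"
      for i j k
      unfolding e_def prod.case by (simp only: power_add power_mult mult.assoc)
    then have "(\<Sum>m\<in>S. w m * t ^ e m)
        = (\<Sum>(i, j, k)\<in>S. w (i, j, k) * t ^ i * (t ^ D) ^ j * ((t ^ D) ^ D) ^ k)"
      by (intro sum.cong) auto
    also have "\<dots> = 0"
      by (rule zero)
    finally show ?thesis .
  qed
  ultimately show ?thesis
    using sum_power_eq_0_imp_coeff_eq_0[OF fin] \<open>m \<in> S\<close> by metis
qed

lemma monomials2_independent:
  fixes w :: "nat \<times> nat \<Rightarrow> 'a::{idom,ring_char_0}"
  assumes fin: "finite S" and zero: "\<And>x y. (\<Sum>(i, j)\<in>S. w (i, j) * x ^ i * y ^ j) = 0"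
    and "m \<in> S"
  shows "w m = 0"
proof -
  define emb where "emb = (\<lambda>(i::nat, j::nat). (i, j, 0::nat))"
  have inj: "inj_on emb S"
    by (rule inj_onI) (auto simp: emb_def)
  have "(\<Sum>(i, j, k)\<in>emb ` S. w (i, j) * x ^ i * y ^ j * z ^ k) = 0" for x y z :: 'a
    unfolding sum.reindex[OF inj] using zero[of x y] by (simp add: emb_def case_prod_unfold)
  then have "(\<lambda>(i, j, k). w (i, j)) (emb m) = 0"
    using monomials3_independent[of "emb ` S" "\<lambda>(i, j, k). w (i, j)" "emb m"] fin \<open>m \<in> S\<close>
    by (auto simp: case_prod_unfold)
  then show ?thesis
    by (cases m) (simp add: emb_def)
qed

lemma coeff_sums_eq_if_sum_monomials_eq_1:
  fixes f :: "'b \<Rightarrow> 'a::{idom,ring_char_0}" and e :: "'b \<Rightarrow> nat \<times> nat"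
  assumes fin: "finite T" and one: "\<And>x y. (\<Sum>s\<in>T. f s * x ^ fst (e s) * y ^ snd (e s)) = 1"
  shows "sum f {s \<in> T. e s = m} = (if m = (0, 0) then 1 else 0)"
proof -
  define F where "F m = sum f {s \<in> T. e s = m}" for m
  define w where "w m = F m - (if m = (0, 0) then 1 else 0)" for m
  let ?E = "insert (0, 0) (e ` T)"
  have F0: "F m = 0" if "m \<notin> e ` T" for m
    using that by (auto simp: F_def intro: sum.neutral)
  have sum_zero: "(\<Sum>(i, j)\<in>?E. w (i, j) * x ^ i * y ^ j) = 0" for x y :: 'a
  proof -
    have "(\<Sum>s\<in>T. f s * x ^ fst (e s) * y ^ snd (e s))
        = (\<Sum>m\<in>e ` T. \<Sum>s\<in>{s \<in> T. e s = m}. f s * x ^ fst (e s) * y ^ snd (e s))"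
      by (rule sum.image_gen[OF fin])
    also have "\<dots> = (\<Sum>(i, j)\<in>e ` T. F (i, j) * x ^ i * y ^ j)"
    proof -
      have "(\<Sum>s\<in>{s \<in> T. e s = m}. f s * x ^ fst (e s) * y ^ snd (e s))
          = F m * x ^ fst m * y ^ snd m" for m
        unfolding F_def sum_distrib_right by (rule sum.cong) auto
      then show ?thesis
        by (simp add: case_prod_unfold)
    qed
    also have "\<dots> = (\<Sum>(i, j)\<in>?E. F (i, j) * x ^ i * y ^ j)"
      by (rule sum.mono_neutral_left) (use fin F0 in auto)
    finally have "(\<Sum>(i, j)\<in>?E. F (i, j) * x ^ i * y ^ j) = 1"
      using one by simp
    moreover have "(\<Sum>(i, j)\<in>?E. (if (i, j) = (0, 0) then 1 else 0) * x ^ i * y ^ j) = (1::'a)"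
    proof -
      have "(\<Sum>(i, j)\<in>?E. (if (i, j) = (0, 0) then 1 else 0) * x ^ i * y ^ j)
          = (\<Sum>m\<in>?E. if m = (0, 0) then 1 else (0::'a))"
        by (rule sum.cong) (auto split: if_splits)
      also have "\<dots> = 1"
        using fin by (simp add: sum.delta)
      finally show ?thesis .
    qed
    ultimately show ?thesis
      by (simp add: w_def case_prod_unfold algebra_simps sum_subtractf)
  qed
  have "w m = 0" if "m \<in> ?E"
    using monomials2_independent[OF _ sum_zero that] fin by simp
  then show ?thesis
    using F0 by (cases "m \<in> ?E") (auto simp: w_def F_def)
qed

lemma prime_root_of_unity_dvd:
  fixes \<eta> :: "'a::monoid_mult"
  assumes "prime p" and "\<eta> ^ p = 1" and "\<eta> \<noteq> 1" and "\<eta> ^ n = 1"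
  shows "p dvd n"
proof (rule ccontr)
  assume "\<not> p dvd n"
  then have "n \<noteq> 0"
    by (metis dvd_0_right)
  have "gcd n p = 1"
    using prime_imp_coprime_nat[OF assms(1) \<open>\<not> p dvd n\<close>]
    by (simp add: coprime_commute coprime_iff_gcd_eq_1)
  then obtain u v where uv: "n * u = p * v + 1"
    using bezout_nat[OF \<open>n \<noteq> 0\<close>, of p] by auto
  have "\<eta> = (\<eta> ^ p) ^ v * \<eta>"
    using assms(2) by simp
  also have "\<dots> = (\<eta> ^ n) ^ u"
    by (simp only: power_mult[symmetric] uv power_add power_one_right)
  also have "\<dots> = 1"
    using assms(4) by simp
  finally show False
    using assms(3) by simp
qed

lemma special_monomial_root_of_unity:
  assumes sp: "special \<eta> G" and m: "(i, j, k) \<in> supp3 G"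
  shows "\<eta> ^ (i + 2 * j + 4 * k) = 1"
proof -
  define w where "w = (\<lambda>(i, j, k). complex_of_real (G i j k) * (\<eta> ^ (i + 2 * j + 4 * k) - 1))"
  have "(\<Sum>(i, j, k)\<in>supp3 G. w (i, j, k) * x ^ i * y ^ j * z ^ k) = 0" for x y z
  proof -
    have "w (i, j, k) * x ^ i * y ^ j * z ^ k
        = of_real (G i j k) * (\<eta> * x) ^ i * (\<eta> ^ 2 * y) ^ j * (\<eta> ^ 4 * z) ^ k
          - of_real (G i j k) * x ^ i * y ^ j * z ^ k" for i j k
      by (simp add: w_def power_mult_distrib power_add flip: power_mult) (simp add: algebra_simps)
    then have "(\<Sum>(i, j, k)\<in>supp3 G. w (i, j, k) * x ^ i * y ^ j * z ^ k)
        = eval3 G (\<eta> * x) (\<eta> ^ 2 * y) (\<eta> ^ 4 * z) - eval3 G x y z"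
      by (simp add: eval3_def case_prod_unfold sum_subtractf)
    also have "\<dots> = 0"
      using sp by (simp add: special_def)
    finally show ?thesis .
  qed
  then have "w (i, j, k) = 0"
    using monomials3_independent[of "supp3 G" w] sp m by (simp add: special_def is_poly3_def)
  moreover have "G i j k \<noteq> 0"
    using m by (simp add: supp3_def)
  ultimately show ?thesis
    by (simp add: w_def)
qed

lemma special_const_notin_supp3:
  assumes sp: "special \<eta> G"
  shows "(0, 0, 0) \<notin> supp3 G"
proof
  assume const: "(0, 0, 0) \<in> supp3 G"
  have "eval3 G (0::real) 0 0 = (\<Sum>m\<in>supp3 G. if m = (0, 0, 0) then G 0 0 0 else 0)"
    unfolding eval3_def by (rule sum.cong) auto
  also have "\<dots> = G 0 0 0"
    using sp const by (simp add: special_def is_poly3_def)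
  finally show False
    using sp const by (simp add: special_def supp3_def)
qed

lemma special_supp3_nonempty:
  assumes "special \<eta> c"
  shows "supp3 c \<noteq> {}"
proof
  assume "supp3 c = {}"
  then have "eval3 c (1::real) 0 0 = 0"
    by (simp add: eval3_def)
  moreover have "eval3 c (1::real) 0 0 = 1"
    using assms by (simp add: special_def)
  ultimately show False
    by simp
qed

definition trinomial_coeff :: "nat \<Rightarrow> nat \<Rightarrow> nat \<Rightarrow> real" where
  "trinomial_coeff k a b = (-1) ^ (a + b) * of_nat (k choose a) * of_nat ((k - a) choose b)"

lemma trinomial_coeff_eq_0:
  assumes "k < a + b"
  shows "trinomial_coeff k a b = 0"
  using assms by (cases "k < a") (simp_all add: trinomial_coeff_def)

lemma one_minus_sum_power_expansion:
  fixes x y :: real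
  assumes "k \<le> K"
  shows "(1 - x - y) ^ k = (\<Sum>a\<le>K. \<Sum>b\<le>K. trinomial_coeff k a b * x ^ a * y ^ b)"
proof -
  have inner: "(1 - y) ^ (k - a) = (\<Sum>b\<le>K. of_nat ((k - a) choose b) * (-y) ^ b)" for a
  proof -
    have "(1 - y) ^ (k - a) = ((-y) + 1) ^ (k - a)"
      by simp
    also have "\<dots> = (\<Sum>b\<le>k - a. of_nat ((k - a) choose b) * (-y) ^ b * 1 ^ (k - a - b))"
      by (rule binomial_ring)
    also have "\<dots> = (\<Sum>b\<le>K. of_nat ((k - a) choose b) * (-y) ^ b)"
      by (simp, rule sum.mono_neutral_left) (use assms in auto)
    finally show ?thesis .
  qed
  have "(1 - x - y) ^ k = ((-x) + (1 - y)) ^ k"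
    by (simp add: algebra_simps)
  also have "\<dots> = (\<Sum>a\<le>k. of_nat (k choose a) * (-x) ^ a * (1 - y) ^ (k - a))"
    by (rule binomial_ring)
  also have "\<dots> = (\<Sum>a\<le>K. of_nat (k choose a) * (-x) ^ a * (1 - y) ^ (k - a))"
    by (rule sum.mono_neutral_left) (use assms in auto)
  also have "\<dots> = (\<Sum>a\<le>K. \<Sum>b\<le>K. trinomial_coeff k a b * x ^ a * y ^ b)"
  proof (rule sum.cong[OF refl])
    fix a
    have "of_nat (k choose a) * (-x) ^ a * (of_nat ((k - a) choose b) * (-y) ^ b)
        = trinomial_coeff k a b * x ^ a * y ^ b" for b
      by (simp add: trinomial_coeff_def power_minus[of x] power_minus[of y] power_add mult_ac)
    then show "of_nat (k choose a) * (-x) ^ a * (1 - y) ^ (k - a)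
        = (\<Sum>b\<le>K. trinomial_coeff k a b * x ^ a * y ^ b)"
      by (simp add: inner sum_distrib_left)
  qed
  finally show ?thesis .
qed

text \<open>\<open>plane_coeff i j k p q\<close> is the coefficient of \<open>x^p y^q\<close> in \<open>x^i y^j (1 - x - y)^k\<close>.\<close>

definition plane_coeff :: "nat \<Rightarrow> nat \<Rightarrow> nat \<Rightarrow> nat \<Rightarrow> nat \<Rightarrow> real" where
  "plane_coeff i j k p q = (if i \<le> p \<and> j \<le> q then trinomial_coeff k (p - i) (q - j) else 0)"

lemma monomial_one_minus_sum_power_expansion:
  fixes x y :: real
  assumes "k \<le> K"
  shows "x ^ i * y ^ j * (1 - x - y) ^ k
    = (\<Sum>(a, b)\<in>{..K} \<times> {..K}. trinomial_coeff k a b * x ^ (i + a) * y ^ (j + b))"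
  unfolding one_minus_sum_power_expansion[OF assms] sum_distrib_left
    sum.cartesian_product[symmetric]
  by (intro sum.cong refl) (simp add: power_add mult_ac)

lemma sum_shifted_trinomial_coeff:
  assumes "k \<le> K"
  shows "(\<Sum>(a, b)\<in>{..K} \<times> {..K}. if (i + a, j + b) = (p, q) then trinomial_coeff k a b else 0)
    = plane_coeff i j k p q"
proof (cases "i \<le> p \<and> j \<le> q \<and> p - i \<le> K \<and> q - j \<le> K")
  case True
  have "(\<Sum>(a, b)\<in>{..K} \<times> {..K}. if (i + a, j + b) = (p, q) then trinomial_coeff k a b else 0)
      = (\<Sum>ab\<in>{..K} \<times> {..K}. if ab = (p - i, q - j) then trinomial_coeff k (p - i) (q - j) else 0)"
    by (rule sum.cong) (use True in \<open>auto split: if_splits\<close>)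
  then show ?thesis
    using True by (simp add: plane_coeff_def)
next
  case False
  then have "plane_coeff i j k p q = 0"
    using assms by (auto simp: plane_coeff_def intro: trinomial_coeff_eq_0)
  moreover have
    "(\<Sum>(a, b)\<in>{..K} \<times> {..K}. if (i + a, j + b) = (p, q) then trinomial_coeff k a b else 0) = 0"
    by (rule sum.neutral) (use False in auto)
  ultimately show ?thesis
    by simp
qed

lemma coeffs_of_plane_identity:
  fixes c :: "nat \<Rightarrow> nat \<Rightarrow> nat \<Rightarrow> real"
  assumes fin: "finite S"
    and one: "\<And>x y. (\<Sum>(i, j, k)\<in>S. c i j k * x ^ i * y ^ j * (1 - x - y) ^ k) = 1"
  shows "(\<Sum>(i, j, k)\<in>S. c i j k * plane_coeff i j k p q) = (if p = 0 \<and> q = 0 then 1 else 0)"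
proof -
  obtain K where "(\<lambda>(i, j, k). k) ` S \<subseteq> {..<K}"
    using finite_nat_bounded fin by blast
  then have K: "k \<le> K" if "(i, j, k) \<in> S" for i j k
    using that by auto
  let ?T = "S \<times> ({..K} \<times> {..K})"
  define f where "f = (\<lambda>((i, j, k), (a, b)). c i j k * trinomial_coeff k a b)"
  define e where "e = (\<lambda>((i::nat, j::nat, k::nat), (a::nat, b::nat)). (i + a, j + b))"
  have split: "(\<Sum>s\<in>?T. h s) = (\<Sum>(i, j, k)\<in>S. \<Sum>(a, b)\<in>{..K} \<times> {..K}. h ((i, j, k), (a, b)))"
    for h :: "_ \<Rightarrow> real"
    by (simp add: sum.cartesian_product case_prod_unfold)
  have "(\<Sum>s\<in>?T. f s * x ^ fst (e s) * y ^ snd (e s)) = 1" for x y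
  proof -
    have "(\<Sum>s\<in>?T. f s * x ^ fst (e s) * y ^ snd (e s))
        = (\<Sum>(i, j, k)\<in>S. c i j k *
            (\<Sum>(a, b)\<in>{..K} \<times> {..K}. trinomial_coeff k a b * x ^ (i + a) * y ^ (j + b)))"
      unfolding split sum_distrib_left
      by (rule sum.cong) (auto simp: f_def e_def mult_ac intro!: sum.cong)
    also have "\<dots> = (\<Sum>(i, j, k)\<in>S. c i j k * (x ^ i * y ^ j * (1 - x - y) ^ k))"
      by (intro sum.cong refl)
        (auto simp only: split_paired_all prod.case monomial_one_minus_sum_power_expansion[OF K])
    also have "\<dots> = 1"
      using one[of x y] by (simp add: mult.assoc)
    finally show ?thesis .
  qed
  then have "sum f {s \<in> ?T. e s = (p, q)} = (if (p, q) = (0, 0) then 1 else 0)"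
    by (rule coeff_sums_eq_if_sum_monomials_eq_1[rotated]) (simp add: fin)
  moreover have "sum f {s \<in> ?T. e s = (p, q)} = (\<Sum>(i, j, k)\<in>S. c i j k * plane_coeff i j k p q)"
  proof -
    have "sum f {s \<in> ?T. e s = (p, q)} = (\<Sum>s\<in>?T. if e s = (p, q) then f s else 0)"
      by (rule sum.inter_filter) (simp add: fin)
    also have "\<dots> = (\<Sum>(i, j, k)\<in>S. c i j k *
        (\<Sum>(a, b)\<in>{..K} \<times> {..K}. if (i + a, j + b) = (p, q) then trinomial_coeff k a b else 0))"
      unfolding split sum_distrib_left
      by (rule sum.cong) (auto simp: f_def e_def intro!: sum.cong)
    also have "\<dots> = (\<Sum>(i, j, k)\<in>S. c i j k * plane_coeff i j k p q)"
      by (intro sum.cong refl)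
        (auto simp only: split_paired_all prod.case sum_shifted_trinomial_coeff[OF K])
    finally show ?thesis .
  qed
  ultimately show ?thesis
    by simp
qed

lemma le_deg3:
  assumes "is_poly3 c" and "(i, j, k) \<in> supp3 c"
  shows "i + j + k \<le> deg3 c"
  using assms unfolding deg3_def is_poly3_def
  by (metis (mono_tags, lifting) Max_ge case_prod_conv finite_imageI image_eqI)

lemma deg3_attained:
  assumes "is_poly3 c" and "supp3 c \<noteq> {}"
  obtains i j k where "(i, j, k) \<in> supp3 c" and "i + j + k = deg3 c"
proof -
  have "deg3 c \<in> (\<lambda>(i, j, k). i + j + k) ` supp3 c"
    unfolding deg3_def using assms by (intro Max_in) (auto simp: is_poly3_def)
  then show ?thesis
    using that by auto
qed

lemma coeff_eq_0_if_deg3_less: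
  assumes "is_poly3 c" and "deg3 c < i + j + k"
  shows "c i j k = 0"
  using le_deg3[OF assms(1), of i j k] assms(2) by (force simp: supp3_def)

lemma card_ge_if_meets_disjoint_pairs:
  fixes S A :: "'a set" and Q :: "('a \<times> 'a) set"
  assumes fin: "finite S" and "A \<subseteq> S" and "finite Q"
    and meets: "\<forall>(u, v)\<in>Q. u \<in> S \<or> v \<in> S"
    and disj: "\<forall>p\<in>Q. \<forall>q\<in>Q. p \<noteq> q \<longrightarrow> {fst p, snd p} \<inter> {fst q, snd q} = {}"
    and outside: "\<forall>(u, v)\<in>Q. u \<notin> A \<and> v \<notin> A"
  shows "card A + card Q \<le> card S"
proof -
  define pick where "pick = (\<lambda>(u, v). if u \<in> S then u else v)"
  have pick: "pick p \<in> S" "pick p \<in> {fst p, snd p}" if "p \<in> Q" for p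
    using meets that by (auto simp: pick_def split: prod.splits)
  have "inj_on pick Q"
  proof (rule inj_onI)
    fix p q assume pq: "p \<in> Q" "q \<in> Q" "pick p = pick q"
    show "p = q"
    proof (rule ccontr)
      assume "p \<noteq> q"
      then have "{fst p, snd p} \<inter> {fst q, snd q} = {}"
        using disj pq(1,2) by blast
      moreover have "pick p \<in> {fst p, snd p} \<inter> {fst q, snd q}"
        using pick(2)[OF pq(1)] pick(2)[OF pq(2)] pq(3) by simp
      ultimately show False
        by blast
    qed
  qed
  moreover have "A \<inter> pick ` Q = {}"
    using outside pick(2) by fastforce
  moreover have "A \<union> pick ` Q \<subseteq> S"
    using \<open>A \<subseteq> S\<close> pick(1) by auto
  ultimately show ?thesis
    using card_mono[OF fin] finite_subset[OF \<open>A \<subseteq> S\<close> fin] \<open>finite Q\<close>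
    by (metis card_Un_disjoint card_image finite_imageI)
qed

definition invariant_monomials :: "(nat \<times> nat \<times> nat) set" where
  "invariant_monomials =
    {(i, j, k). i + j + k \<le> 11 \<and> 7 dvd i + 2 * j + 4 * k \<and> (i, j, k) \<noteq> (0, 0, 0)}"

definition invariant_monomial_list :: "(nat \<times> nat \<times> nat) list" where
  "invariant_monomial_list = [
    (1, 1, 1), (0, 1, 3), (1, 3, 0), (3, 0, 1), (0, 3, 2), (2, 0, 3), (3, 2, 0), (0, 5, 1),
    (1, 0, 5), (2, 2, 2), (5, 1, 0), (0, 0, 7), (0, 7, 0), (1, 2, 4), (2, 4, 1), (4, 1, 2),
    (7, 0, 0), (0, 2, 6), (1, 4, 3), (2, 6, 0), (3, 1, 4), (4, 3, 1), (6, 0, 2), (0, 4, 5),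
    (1, 6, 2), (2, 1, 6), (3, 3, 3), (4, 5, 0), (5, 0, 4), (6, 2, 1), (0, 6, 4), (1, 1, 8),
    (1, 8, 1), (2, 3, 5), (3, 5, 2), (4, 0, 6), (5, 2, 3), (6, 4, 0), (8, 1, 1), (0, 1, 10),
    (0, 8, 3), (1, 3, 7), (1, 10, 0), (2, 5, 4), (3, 0, 8), (3, 7, 1), (4, 2, 5), (5, 4, 2),
    (7, 1, 3), (8, 3, 0), (10, 0, 1)]"

lemma invariant_monomials_eq: "invariant_monomials = set invariant_monomial_list"
proof
  have range: "{..11::nat} = {0, 1, 2, 3, 4, 5, 6, 7, 8, 9, 10, 11}"
    by (auto; presburger)
  have enum: "\<forall>k\<in>{..11}. \<forall>j\<in>{..11}. \<forall>i\<in>{..11}.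
      if i + j + k \<le> 11 \<and> 7 dvd i + 2 * j + 4 * k \<and> (i, j, k) \<noteq> (0, 0, 0)
      then (i, j, k) \<in> set invariant_monomial_list else True"
    unfolding range invariant_monomial_list_def by (simp del: One_nat_def; presburger)
  show "invariant_monomials \<subseteq> set invariant_monomial_list"
  proof
    fix m assume "m \<in> invariant_monomials"
    then obtain i j k where m: "m = (i, j, k)"
      and cond: "i + j + k \<le> 11" "7 dvd i + 2 * j + 4 * k" "(i, j, k) \<noteq> (0, 0, 0)"
      by (auto simp: invariant_monomials_def)
    have "if i + j + k \<le> 11 \<and> 7 dvd i + 2 * j + 4 * k \<and> (i, j, k) \<noteq> (0, 0, 0)
        then (i, j, k) \<in> set invariant_monomial_list else True"
      by (rule enum[rule_format]) (use cond in auto)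
    then show "m \<in> set invariant_monomial_list"
      using cond by (simp only: m simp_thms if_True)
  qed
  show "set invariant_monomial_list \<subseteq> invariant_monomials"
    by (simp add: invariant_monomials_def invariant_monomial_list_def)
qed

lemma sum_invariant_monomials:
  "sum f invariant_monomials = sum_list (map f invariant_monomial_list)"
proof -
  have "distinct invariant_monomial_list"
    by (simp add: invariant_monomial_list_def)
  then show ?thesis
    by (simp add: invariant_monomials_eq sum.distinct_set_conv_list)
qed

lemma finite_invariant_monomials: "finite invariant_monomials"
  by (simp add: invariant_monomials_eq)

text \<open>
  The support of a special polynomial of degree 10, apart from \<open>x y z\<close>, whose coefficient
  \<open>14 - G 8 1 1\<close> may vanish.
\<close>

definition deg10_support :: "(nat \<times> nat \<times> nat) set" where
  "deg10_support = {
    (0, 1, 3), (1, 3, 0), (3, 0, 1), (0, 3, 2), (2, 0, 3), (3, 2, 0), (0, 5, 1), (1, 0, 5),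
    (2, 2, 2), (5, 1, 0), (0, 0, 7), (0, 7, 0), (1, 2, 4), (2, 4, 1), (4, 1, 2), (7, 0, 0),
    (1, 4, 3), (3, 1, 4), (4, 3, 1), (1, 6, 2), (2, 1, 6), (3, 3, 3), (6, 2, 1), (1, 1, 8),
    (1, 8, 1), (2, 3, 5), (3, 5, 2), (5, 2, 3), (8, 1, 1)}"

locale special_deg_le_11 =
  fixes \<eta> :: complex and G :: poly3
  assumes special: "special \<eta> G"
    and root: "\<eta> ^ 7 = 1" "\<eta> \<noteq> 1"
    and deg_le: "deg3 G \<le> 11"
begin

lemma poly: "is_poly3 G"
  using special by (simp add: special_def)

lemma finite_supp: "finite (supp3 G)"
  using poly by (simp add: is_poly3_def)

lemma nonneg: "0 \<le> G i j k"
  using special by (simp add: special_def)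

lemma supp3_subset: "supp3 G \<subseteq> invariant_monomials"
proof
  fix m assume m: "m \<in> supp3 G"
  obtain i j k where [simp]: "m = (i, j, k)"
    by (cases m)
  have "i + j + k \<le> 11"
    using le_deg3[OF poly] m deg_le by fastforce
  moreover have "7 dvd i + 2 * j + 4 * k"
    using prime_root_of_unity_dvd[OF _ root] special_monomial_root_of_unity[OF special] m by simp
  moreover have "m \<noteq> (0, 0, 0)"
    using special_const_notin_supp3[OF special] m by blast
  ultimately show "m \<in> invariant_monomials"
    by (simp add: invariant_monomials_def)
qed

lemma plane_identity:
  "(\<Sum>(i, j, k)\<in>invariant_monomials. G i j k * x ^ i * y ^ j * (1 - x - y) ^ k) = 1"
proof -
  have "(\<Sum>(i, j, k)\<in>invariant_monomials. G i j k * x ^ i * y ^ j * (1 - x - y) ^ k)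
      = eval3 G x y (1 - x - y)"
    unfolding eval3_def of_real_eq_id id_apply
    by (rule sum.mono_neutral_right[OF finite_invariant_monomials supp3_subset])
      (auto simp: supp3_def)
  also have "\<dots> = 1"
    using special by (simp add: special_def)
  finally show ?thesis .
qed

lemma plane_equation:
  "(\<Sum>(i, j, k)\<in>invariant_monomials. G i j k * plane_coeff i j k p q)
    = (if p = 0 \<and> q = 0 then 1 else 0)"
  by (rule coeffs_of_plane_identity) (simp_all add: finite_invariant_monomials plane_identity)

text \<open>
  Taken in the order below, each plane equation determines one new coefficient, so that every
  coefficient becomes an affine function of the four free ones \<open>G 8 1 1\<close>, \<open>G 0 1 10\<close>,
  \<open>G 1 10 0\<close> and \<open>G 10 0 1\<close>; as simp rules the earlier entries feed the later proofs.
  \<open>One_nat_def\<close> is kept out of these simp calls (and the later ones using the table):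
  it would rewrite the index \<open>1\<close> to \<open>Suc 0\<close>, and the entries would no longer match.
\<close>

lemmas plane_equation_simps = sum_invariant_monomials invariant_monomial_list_def
  plane_coeff_def trinomial_coeff_def binomial_fact binomial_eq_0 fact_numeral

lemma coeff_0_0_7 [simp]: "G 0 0 7 = 1"
  using plane_equation[of 0 0] by (simp add: plane_equation_simps del: One_nat_def; linarith)
lemma coeff_0_1_3 [simp]: "G 0 1 3 = 7 - G 0 1 10"
  using plane_equation[of 0 1] by (simp add: plane_equation_simps del: One_nat_def; linarith)
lemma coeff_1_0_5 [simp]: "G 1 0 5 = 7"
  using plane_equation[of 1 0] by (simp add: plane_equation_simps del: One_nat_def; linarith)
lemma coeff_0_2_6 [simp]: "G 0 2 6 = 7 * G 0 1 10"
  using plane_equation[of 0 2] by (simp add: plane_equation_simps del: One_nat_def; linarith)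
lemma coeff_2_0_3 [simp]: "G 2 0 3 = 14"
  using plane_equation[of 2 0] by (simp add: plane_equation_simps del: One_nat_def; linarith)
lemma coeff_0_3_2 [simp]: "G 0 3 2 = 14"
  using plane_equation[of 0 3] by (simp add: plane_equation_simps del: One_nat_def; linarith)
lemma coeff_0_4_5 [simp]: "G 0 4 5 = 14 * G 0 1 10"
  using plane_equation[of 0 4] by (simp add: plane_equation_simps del: One_nat_def; linarith)
lemma coeff_0_5_1 [simp]: "G 0 5 1 = 7"
  using plane_equation[of 0 5] by (simp add: plane_equation_simps del: One_nat_def; linarith)
lemma coeff_0_6_4 [simp]: "G 0 6 4 = 7 * G 0 1 10"
  using plane_equation[of 0 6] by (simp add: plane_equation_simps del: One_nat_def; linarith)
lemma coeff_0_7_0 [simp]: "G 0 7 0 = 1"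
  using plane_equation[of 0 7] by (simp add: plane_equation_simps del: One_nat_def; linarith)
lemma coeff_0_8_3 [simp]: "G 0 8 3 = G 0 1 10"
  using plane_equation[of 0 8] by (simp add: plane_equation_simps del: One_nat_def; linarith)
lemma coeff_1_3_7 [simp]: "G 1 3 7 = 7 * G 0 1 10 + G 1 10 0"
  using plane_equation[of 1 10] by (simp add: plane_equation_simps del: One_nat_def; linarith)
lemma coeff_2_5_4 [simp]: "G 2 5 4 = 7 * G 0 1 10 + 7 * G 1 10 0"
  using plane_equation[of 2 9] by (simp add: plane_equation_simps del: One_nat_def; linarith)
lemma coeff_3_0_8 [simp]: "G 3 0 8 = G 10 0 1"
  using plane_equation[of 11 0] by (simp add: plane_equation_simps del: One_nat_def; linarith)
lemma coeff_3_0_1 [simp]: "G 3 0 1 = 7 - G 10 0 1"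
  using plane_equation[of 3 0] by (simp add: plane_equation_simps del: One_nat_def; linarith)
lemma coeff_4_0_6 [simp]: "G 4 0 6 = 7 * G 10 0 1"
  using plane_equation[of 4 0] by (simp add: plane_equation_simps del: One_nat_def; linarith)
lemma coeff_5_0_4 [simp]: "G 5 0 4 = 14 * G 10 0 1"
  using plane_equation[of 5 0] by (simp add: plane_equation_simps del: One_nat_def; linarith)
lemma coeff_6_0_2 [simp]: "G 6 0 2 = 7 * G 10 0 1"
  using plane_equation[of 6 0] by (simp add: plane_equation_simps del: One_nat_def; linarith)
lemma coeff_7_0_0 [simp]: "G 7 0 0 = 1"
  using plane_equation[of 7 0] by (simp add: plane_equation_simps del: One_nat_def; linarith)
lemma coeff_3_7_1 [simp]: "G 3 7 1 = 7 * G 1 10 0 + G 10 0 1"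
  using plane_equation[of 3 8] by (simp add: plane_equation_simps del: One_nat_def; linarith)
lemma coeff_4_2_5 [simp]: "G 4 2 5 = 7 * G 0 1 10 + 7 * G 10 0 1"
  using plane_equation[of 4 7] by (simp add: plane_equation_simps del: One_nat_def; linarith)
lemma coeff_5_4_2 [simp]: "G 5 4 2 = 7 * G 1 10 0 + 7 * G 10 0 1"
  using plane_equation[of 5 6] by (simp add: plane_equation_simps del: One_nat_def; linarith)
lemma coeff_7_1_3 [simp]: "G 7 1 3 = G 0 1 10 + 7 * G 10 0 1"
  using plane_equation[of 7 4] by (simp add: plane_equation_simps del: One_nat_def; linarith)
lemma coeff_1_1_8 [simp]: "G 1 1 8 = G 8 1 1 + 7 * G 0 1 10 - 7 * G 10 0 1"
  using plane_equation[of 9 1] by (simp add: plane_equation_simps del: One_nat_def; linarith)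
lemma coeff_1_1_1 [simp]: "G 1 1 1 = 14 - G 8 1 1 + 7 * G 10 0 1"
  using plane_equation[of 1 1] by (simp add: plane_equation_simps del: One_nat_def; linarith)
lemma coeff_1_2_4 [simp]: "G 1 2 4 = 7 + 7 * G 8 1 1 + 14 * G 0 1 10 - 49 * G 10 0 1"
  using plane_equation[of 1 2] by (simp add: plane_equation_simps del: One_nat_def; linarith)
lemma coeff_2_1_6 [simp]: "G 2 1 6 = 7 * G 8 1 1 + 14 * G 0 1 10 - 49 * G 10 0 1"
  using plane_equation[of 2 1] by (simp add: plane_equation_simps del: One_nat_def; linarith)
lemma coeff_1_3_0 [simp]: "G 1 3 0 = 7 - G 1 10 0"
  using plane_equation[of 1 3] by (simp add: plane_equation_simps del: One_nat_def; linarith)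
lemma coeff_2_2_2 [simp]: "G 2 2 2 = 7 + 14 * G 8 1 1 - 98 * G 10 0 1"
  using plane_equation[of 2 2] by (simp add: plane_equation_simps del: One_nat_def; linarith)
lemma coeff_3_1_4 [simp]: "G 3 1 4 = 14 * G 8 1 1 + 7 * G 0 1 10 - 91 * G 10 0 1"
  using plane_equation[of 3 1] by (simp add: plane_equation_simps del: One_nat_def; linarith)
lemma coeff_1_4_3 [simp]: "G 1 4 3 = 14 * G 8 1 1 + 7 * G 0 1 10 + 7 * G 1 10 0 - 98 * G 10 0 1"
  using plane_equation[of 1 4] by (simp add: plane_equation_simps del: One_nat_def; linarith)
lemma coeff_2_3_5 [simp]: "G 2 3 5 = 7 * G 8 1 1 + 7 * G 0 1 10 + 7 * G 1 10 0 - 49 * G 10 0 1"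
  using plane_equation[of 2 3] by (simp add: plane_equation_simps del: One_nat_def; linarith)
lemma coeff_3_2_0 [simp]: "G 3 2 0 = 14"
  using plane_equation[of 3 2] by (simp add: plane_equation_simps del: One_nat_def; linarith)
lemma coeff_4_1_2 [simp]: "G 4 1 2 = 7 + 7 * G 8 1 1 - 35 * G 10 0 1"
  using plane_equation[of 4 1] by (simp add: plane_equation_simps del: One_nat_def; linarith)
lemma coeff_2_4_1 [simp]: "G 2 4 1 = 7 + 7 * G 8 1 1 + 14 * G 1 10 0 - 49 * G 10 0 1"
  using plane_equation[of 2 4] by (simp add: plane_equation_simps del: One_nat_def; linarith)
lemma coeff_3_3_3 [simp]: "G 3 3 3 = 7 * G 8 1 1 + 14 * G 0 1 10 + 14 * G 1 10 0 - 35 * G 10 0 1"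
  using plane_equation[of 3 3] by (simp add: plane_equation_simps del: One_nat_def; linarith)
lemma coeff_5_1_0 [simp]: "G 5 1 0 = 7"
  using plane_equation[of 5 1] by (simp add: plane_equation_simps del: One_nat_def; linarith)
lemma coeff_1_6_2 [simp]: "G 1 6 2 = 7 * G 8 1 1 + 14 * G 1 10 0 - 49 * G 10 0 1"
  using plane_equation[of 1 6] by (simp add: plane_equation_simps del: One_nat_def; linarith)
lemma coeff_4_3_1 [simp]: "G 4 3 1 = 14 * G 8 1 1 + 7 * G 1 10 0 - 91 * G 10 0 1"
  using plane_equation[of 4 3] by (simp add: plane_equation_simps del: One_nat_def; linarith)
lemma coeff_5_2_3 [simp]: "G 5 2 3 = 7 * G 8 1 1 + 7 * G 0 1 10 - 42 * G 10 0 1"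
  using plane_equation[of 5 2] by (simp add: plane_equation_simps del: One_nat_def; linarith)
lemma coeff_2_6_0 [simp]: "G 2 6 0 = 7 * G 1 10 0"
  using plane_equation[of 2 6] by (simp add: plane_equation_simps del: One_nat_def; linarith)
lemma coeff_3_5_2 [simp]: "G 3 5 2 = 7 * G 8 1 1 + 7 * G 1 10 0 - 42 * G 10 0 1"
  using plane_equation[of 3 5] by (simp add: plane_equation_simps del: One_nat_def; linarith)
lemma coeff_6_2_1 [simp]: "G 6 2 1 = 7 * G 8 1 1 - 35 * G 10 0 1"
  using plane_equation[of 6 2] by (simp add: plane_equation_simps del: One_nat_def; linarith)
lemma coeff_1_8_1 [simp]: "G 1 8 1 = G 8 1 1 + 7 * G 1 10 0 - 7 * G 10 0 1"
  using plane_equation[of 1 8] by (simp add: plane_equation_simps del: One_nat_def; linarith)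
lemma coeff_4_5_0 [simp]: "G 4 5 0 = 14 * G 1 10 0"
  using plane_equation[of 4 5] by (simp add: plane_equation_simps del: One_nat_def; linarith)
lemma coeff_6_4_0 [simp]: "G 6 4 0 = 7 * G 1 10 0"
  using plane_equation[of 6 4] by (simp add: plane_equation_simps del: One_nat_def; linarith)
lemma coeff_8_3_0 [simp]: "G 8 3 0 = G 1 10 0"
  using plane_equation[of 8 3] by (simp add: plane_equation_simps del: One_nat_def; linarith)

lemma supp3_subset_if_coeffs_zero:
  assumes "\<forall>(i, j, k)\<in>invariant_monomials. (i, j, k) \<notin> S \<longrightarrow> G i j k = 0"
  shows "supp3 G \<subseteq> S"
  using assms supp3_subset by (force simp: supp3_def)

lemma subset_supp3_if_coeffs_pos:
  assumes "\<forall>(i, j, k)\<in>S. 0 < G i j k"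
  shows "S \<subseteq> supp3 G"
  using assms by (force simp: supp3_def)

lemma supp3_if_params_zero:
  assumes "G 8 1 1 = 0" and "G 0 1 10 = 0" and "G 1 10 0 = 0" and "G 10 0 1 = 0"
  shows "supp3 G = {
    (1, 1, 1), (0, 1, 3), (1, 3, 0), (3, 0, 1), (0, 3, 2), (2, 0, 3), (3, 2, 0), (0, 5, 1),
    (1, 0, 5), (2, 2, 2), (5, 1, 0), (0, 0, 7), (0, 7, 0), (1, 2, 4), (2, 4, 1), (4, 1, 2),
    (7, 0, 0)}"
    (is "_ = ?S")
proof
  show "supp3 G \<subseteq> ?S"
    by (rule supp3_subset_if_coeffs_zero)
      (simp add: invariant_monomials_eq invariant_monomial_list_def assms del: One_nat_def)
  show "?S \<subseteq> supp3 G"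
    by (rule subset_supp3_if_coeffs_pos) (simp add: assms del: One_nat_def)
qed

lemma supp3_iff_pos: "(i, j, k) \<in> supp3 G \<longleftrightarrow> 0 < G i j k"
  using nonneg[of i j k] by (auto simp: supp3_def)

lemma supp3_subset_if_x10z_orbit_zero:
  assumes "G 0 1 10 = 0" and "G 1 10 0 = 0" and "G 10 0 1 = 0"
  shows "supp3 G \<subseteq> insert (1, 1, 1) deg10_support"
  by (rule supp3_subset_if_coeffs_zero)
    (simp add: invariant_monomials_eq invariant_monomial_list_def deg10_support_def assms
      del: One_nat_def)

lemma deg10_support_subset_supp3:
  assumes "G 0 1 10 = 0" and "G 1 10 0 = 0" and "G 10 0 1 = 0" and "0 < G 8 1 1"
  shows "deg10_support \<subseteq> supp3 G"
  unfolding deg10_support_def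
  by (rule subset_supp3_if_coeffs_pos) (use assms in \<open>auto simp del: One_nat_def\<close>)

lemma deg3_if_params_zero:
  assumes "G 8 1 1 = 0" and "G 0 1 10 = 0" and "G 1 10 0 = 0" and "G 10 0 1 = 0"
  shows "deg3 G = 7"
  unfolding deg3_def supp3_if_params_zero[OF assms] by simp

lemma deg3_and_N3_if_deg3_le_9:
  assumes "deg3 G \<le> 9"
  shows "deg3 G = 7" and "N3 G = 17"
proof -
  have top: "G 8 1 1 = 0" "G 0 1 10 = 0" "G 1 10 0 = 0" "G 10 0 1 = 0"
    using assms by (auto intro!: coeff_eq_0_if_deg3_less[OF poly])
  show "deg3 G = 7"
    by (rule deg3_if_params_zero[OF top])
  show "N3 G = 17"
    by (simp add: N3_def supp3_if_params_zero[OF top])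
qed

lemma N3_if_deg3_eq_10:
  assumes "deg3 G = 10"
  shows "N3 G = 29 \<or> N3 G = 30"
proof -
  have top: "G 0 1 10 = 0" "G 1 10 0 = 0" "G 10 0 1 = 0"
    using assms by (auto intro!: coeff_eq_0_if_deg3_less[OF poly])
  have "G 8 1 1 \<noteq> 0"
    using deg3_if_params_zero top assms by auto
  then have "0 < G 8 1 1"
    using nonneg[of 8 1 1] by simp
  have "29 \<le> N3 G" and "N3 G \<le> 30"
    using card_mono[OF finite_supp deg10_support_subset_supp3[OF top \<open>0 < G 8 1 1\<close>]]
      card_mono[OF _ supp3_subset_if_x10z_orbit_zero[OF top]]
    by (simp_all add: N3_def deg10_support_def)
  then show ?thesis
    by linarith
qed

lemma x10z_orbit_pos_if_deg3_eq_11: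
  assumes "deg3 G = 11"
  shows "0 < G 10 0 1 \<or> 0 < G 0 1 10 \<or> 0 < G 1 10 0"
proof (rule ccontr)
  assume "\<not> ?thesis"
  then have top: "G 10 0 1 = 0" "G 0 1 10 = 0" "G 1 10 0 = 0"
    using nonneg[of 10 0 1] nonneg[of 0 1 10] nonneg[of 1 10 0] by auto
  obtain i j k where "(i, j, k) \<in> supp3 G" and "i + j + k = 11"
    using deg3_attained[OF poly special_supp3_nonempty[OF special]] assms by metis
  then show False
    using supp3_subset_if_x10z_orbit_zero[OF top(2,3,1)] by (auto simp: deg10_support_def)
qed

lemma card_supp3_ge_31_if_x10z_pos:
  assumes "0 < G 10 0 1"
  shows "31 \<le> card (supp3 G)"
proof -
  have constraints: "0 \<le> G 6 2 1" "0 \<le> G 2 2 2" "0 \<le> G 1 8 1" "0 \<le> G 1 1 8" "0 \<le> G 4 3 1"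
    "0 \<le> G 3 1 4" "0 \<le> G 0 1 10" "0 \<le> G 1 10 0"
    by (fact nonneg)+
  let ?A = "{
    (0, 3, 2), (2, 0, 3), (3, 2, 0), (0, 5, 1), (1, 0, 5), (5, 1, 0), (0, 0, 7), (0, 7, 0),
    (1, 2, 4), (2, 4, 1), (4, 1, 2), (7, 0, 0), (6, 0, 2), (3, 3, 3), (5, 0, 4), (3, 5, 2),
    (4, 0, 6), (5, 2, 3), (8, 1, 1), (3, 0, 8), (3, 7, 1), (4, 2, 5), (5, 4, 2), (7, 1, 3),
    (10, 0, 1)} :: (nat \<times> nat \<times> nat) set"
  let ?Q = "{((1, 1, 1), (6, 2, 1)), ((0, 1, 3), (0, 2, 6)), ((1, 3, 0), (2, 6, 0)),
    ((1, 10, 0), (4, 3, 1)), ((0, 1, 10), (3, 1, 4)), ((8, 3, 0), (2, 2, 2))}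
    :: ((nat \<times> nat \<times> nat) \<times> nat \<times> nat \<times> nat) set"
  have "?A \<subseteq> supp3 G"
    by (rule subset_supp3_if_coeffs_pos) (use assms constraints in \<open>auto simp del: One_nat_def\<close>)
  \<comment> \<open>each pair has a positive member, e.g. \<open>7 * G 1 1 1 + G 6 2 1 = 98 + 14 * G 10 0 1\<close>\<close>
  moreover have "\<forall>(u, v)\<in>?Q. u \<in> supp3 G \<or> v \<in> supp3 G"
    using assms constraints
    by (simp add: supp3_iff_pos del: One_nat_def) (intro conjI; rule disjCI; linarith)
  moreover have "\<forall>p\<in>?Q. \<forall>q\<in>?Q. p \<noteq> q \<longrightarrow> {fst p, snd p} \<inter> {fst q, snd q} = {}"
    by simp
  moreover have "\<forall>(u, v)\<in>?Q. u \<notin> ?A \<and> v \<notin> ?A"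
    by simp
  ultimately have "card ?A + card ?Q \<le> card (supp3 G)"
    by (intro card_ge_if_meets_disjoint_pairs finite_supp) simp_all
  then show ?thesis
    by simp
qed

end

definition rotate3 :: "poly3 \<Rightarrow> poly3" where
  "rotate3 c i j k = c j k i"

lemma supp3_rotate3: "supp3 (rotate3 c) = (\<lambda>(j, k, i). (i, j, k)) ` supp3 c"
  by (force simp: supp3_def rotate3_def image_iff)

lemma inj_on_rotate_exponents: "inj_on (\<lambda>(j::nat, k::nat, i::nat). (i, j, k)) A"
  by (auto simp: inj_on_def)

lemma eval3_rotate3:
  fixes x y z :: "'a::{real_algebra_1,comm_ring_1}"
  shows "eval3 (rotate3 c) x y z = eval3 c y z x"
  unfolding eval3_def supp3_rotate3 sum.reindex[OF inj_on_rotate_exponents]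
  by (rule sum.cong) (auto simp: rotate3_def mult_ac)

lemma N3_rotate3: "N3 (rotate3 c) = N3 c"
  unfolding N3_def supp3_rotate3 by (rule card_image[OF inj_on_rotate_exponents])

lemma deg3_rotate3: "deg3 (rotate3 c) = deg3 c"
  unfolding deg3_def supp3_rotate3 image_image by (simp add: case_prod_unfold add_ac)

lemma special_rotate3:
  assumes root: "\<eta> ^ 7 = 1" and sp: "special \<eta> c"
  shows "special \<eta> (rotate3 c)"
proof -
  have inv: "eval3 c (\<eta> * x) (\<eta> ^ 2 * y) (\<eta> ^ 4 * z) = eval3 c x y z" for x y z
    using sp by (simp add: special_def)
  have "\<eta> ^ 8 = \<eta>"
    using root power_add[of \<eta> 7 1] by simp
  \<comment> \<open>Invariance under \<eta> applied twice is invariance under \<eta>^2, and \<eta>^8 = \<eta>.\<close>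
  have "eval3 (rotate3 c) (\<eta> * x) (\<eta> ^ 2 * y) (\<eta> ^ 4 * z) = eval3 (rotate3 c) x y z" for x y z
  proof -
    have "eval3 (rotate3 c) (\<eta> * x) (\<eta> ^ 2 * y) (\<eta> ^ 4 * z)
        = eval3 c (\<eta> * (\<eta> * y)) (\<eta> ^ 2 * (\<eta> ^ 2 * z)) (\<eta> ^ 4 * (\<eta> ^ 4 * x))"
      using \<open>\<eta> ^ 8 = \<eta>\<close>
      by (simp add: eval3_rotate3 mult.assoc[symmetric] power_add[symmetric]
          power2_eq_square[symmetric])
    also have "\<dots> = eval3 (rotate3 c) x y z"
      by (simp only: inv eval3_rotate3)
    finally show ?thesis .
  qed
  moreover have "is_poly3 (rotate3 c)"
    using sp by (simp add: special_def is_poly3_def supp3_rotate3)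
  ultimately show ?thesis
    using sp by (simp add: special_def eval3_rotate3 rotate3_def add_ac)
qed

lemma N3_ge_31_if_deg3_eq_11:
  assumes "\<eta> ^ 7 = 1" and "\<eta> \<noteq> 1" and "special \<eta> G" and "deg3 G = 11"
  shows "31 \<le> N3 G"
proof -
  have loc: "special_deg_le_11 \<eta> c" if "special \<eta> c" and "deg3 c = 11" for c
    using that assms(1,2) by unfold_locales simp_all
  have rot: "special \<eta> (rotate3 c)" "deg3 (rotate3 c) = 11" if "special \<eta> c" "deg3 c = 11" for c
    using that special_rotate3[OF assms(1)] deg3_rotate3 by simp_all
  have bound: "31 \<le> N3 c" if "special \<eta> c" and "deg3 c = 11" and "0 < c 10 0 1" for c
    using special_deg_le_11.card_supp3_ge_31_if_x10z_pos[OF loc[OF that(1,2)] that(3)]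
    by (simp add: N3_def)
  \<comment> \<open>\<open>rotate3\<close> moves the coefficient of \<open>y z^10\<close>, and applied twice that of \<open>x y^10\<close>, to \<open>x^10 z\<close>\<close>
  have "0 < G 10 0 1 \<or> 0 < rotate3 G 10 0 1 \<or> 0 < rotate3 (rotate3 G) 10 0 1"
    using special_deg_le_11.x10z_orbit_pos_if_deg3_eq_11[OF loc[OF assms(3,4)] assms(4)]
    by (simp add: rotate3_def)
  then show ?thesis
    using bound[OF assms(3,4)] bound[OF rot[OF assms(3,4)]] bound[OF rot[OF rot[OF assms(3,4)]]]
    by (auto simp: N3_rotate3)
qed

theorem proposition5p1:
  fixes \<eta> :: complex
  assumes "\<eta> ^ 7 = 1" and "\<eta> \<noteq> 1"
  shows "(\<forall>G. special \<eta> G \<and> deg3 G = 7 \<longrightarrow> N3 G = 17)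
       \<and> (\<nexists>G. special \<eta> G \<and> (deg3 G = 8 \<or> deg3 G = 9))
       \<and> (\<forall>G. special \<eta> G \<and> deg3 G = 10 \<longrightarrow> N3 G = 29 \<or> N3 G = 30)
       \<and> (\<forall>G. special \<eta> G \<and> deg3 G = 11 \<longrightarrow> N3 G \<ge> 31)"
proof (intro conjI allI impI notI)
  fix G assume G: "special \<eta> G \<and> deg3 G = 7"
  then interpret special_deg_le_11 \<eta> G
    using assms by unfold_locales auto
  show "N3 G = 17"
    using G deg3_and_N3_if_deg3_le_9(2) by simp
next
  assume "\<exists>G. special \<eta> G \<and> (deg3 G = 8 \<or> deg3 G = 9)"
  then obtain G where G: "special \<eta> G" "deg3 G = 8 \<or> deg3 G = 9"
    by blast
  then interpret special_deg_le_11 \<eta> G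
    using assms by unfold_locales auto
  show False
    using G deg3_and_N3_if_deg3_le_9(1) by auto
next
  fix G assume G: "special \<eta> G \<and> deg3 G = 10"
  then interpret special_deg_le_11 \<eta> G
    using assms by unfold_locales auto
  show "N3 G = 29 \<or> N3 G = 30"
    using G N3_if_deg3_eq_10 by simp
next
  fix G assume "special \<eta> G \<and> deg3 G = 11"
  then show "N3 G \<ge> 31"
    using N3_ge_31_if_deg3_eq_11 assms by blast
qed

end
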